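(* In every run of the algorithm described in the context, at every time and for all $i,j\in\{1,\dots,n\}$, we have $w\_sync_i[i]\ge w\_sync_j[i]$.
   Context: Model. There are $n$ asynchronous processes $p_1,\dots,p_n$, of which up to $t<n/2$ may crash; a process runs its algorithm correctly until it crashes. Each ordered pair of processes is linked by a reliable (no loss, corruption, duplication or creation), asynchronous, not necessarily FIFO channel. $p_w$ is the single writer, invoking writes sequentially; $v_0$ is the initial value. Messages: $\textsc{write}(b,v)$ with $b\in\{0,1\}$, which stands for the two types $\textsc{write0}(v)$ and $\textsc{write1}(v)$; $\textsc{read}()$; $\textsc{proceed}()$. Variables of $p_i$. These are: $history_i$ with $history_i[0]=v_0$; $w\_sync_i[1..n]$, initially all $0$; $r\_sync_i[1..n]$, initially all $0$. $\mathsf{write}(v)$ by $p_w$: $wsn\gets w\_sync_w[w]+1$; $w\_sync_w[w]\gets wsn$; $history_w[wsn]\gets v$. Send $\textsc{write}(wsn\bmod 2,v)$ to each $p_j$ with $w\_sync_w[j]=wsn-1$. Wait until at least $n-t$ indices $j$ have $w\_sync_w[j]=wsn$. Return. $\mathsf{read}()$ by $p_i$: $r\_sync_i[i]\gets r\_sync_i[i]+1$ and call the new value $rsn$. Send $\textsc{read}()$ to all $p_j$ with $j\ne i$. Wait until at least $n-t$ indices $j$ have $r\_sync_i[j]=rsn$. Let $sn\gets w\_sync_i[i]$. Wait until at least $n-t$ indices $j$ have $w\_sync_i[j]\ge sn$. Return $history_i[sn]$. On receipt of $\textsc{write}(b,v)$ from $p_j$ at $p_i$: Wait until $b=(w\_sync_i[j]+1)\bmod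 2$. Let $wsn\gets w\_sync_i[j]+1$. If $wsn=w\_sync_i[i]+1$, then set $w\_sync_i[i]\gets wsn$ and $history_i[wsn]\gets v$, and send $\textsc{write}(wsn\bmod 2,v)$ to each $p_\ell$ with $w\_sync_i[\ell]=wsn-1$. Else, if $wsn<w\_sync_i[i]$, send $\textsc{write}((wsn+1)\bmod 2,history_i[wsn+1])$ to $p_j$. Finally set $w\_sync_i[j]\gets wsn$. On receipt of $\textsc{read}()$ from $p_j$ at $p_i$: Let $sn\gets w\_sync_i[i]$; wait until $w\_sync_i[j]\ge sn$; send $\textsc{proceed}()$ to $p_j$. On receipt of $\textsc{proceed}()$ from $p_j$ at $p_i$: $r\_sync_i[j]\gets r\_sync_i[j]+1$. Message handlers run concurrently; a waiting handler does not block the reception of other messages. *)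

theory Defs
  imports Main "HOL-Library.Multiset"
begin

text \<open>Processes are 1..n (naturals),
 p_w is the writer, the value type is 'v with initial value v0. Each local step
 (operation invocation, end of a wait, reception of a message, execution of an enabled
 message handler) is atomic; handlers that wait are kept in a pool of pending handler
 instances, so they do not block the reception of other messages. The channels are a
 multiset of in-transit messages (sender, receiver, message): reliable and not FIFO.\<close>

datatype 'v msg = WriteM nat 'v | ReadM | ProceedM

text \<open>Pending handler instances: a WRITE(b,v) handler from p_j waiting for its condition,
 and a READ handler from p_j that captured sn = w_sync_i[i] on receipt.\<close>
datatype 'v hnd = HWrite nat nat 'v | HRead nat nat

datatype opstate = Idle | Writing nat | ReadWait1 nat | ReadWait2 nat

record 'v lstate =
  history :: "nat \<Rightarrow> 'v"
  w_sync :: "nat \<Rightarrow> nat"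
  r_sync :: "nat \<Rightarrow> nat"
  opst :: opstate
  pend :: "'v hnd multiset"

record 'v gstate =
  loc :: "nat \<Rightarrow> 'v lstate"
  net :: "(nat \<times> nat \<times> 'v msg) multiset"
  crashed :: "nat set"

definition init_state :: "'v \<Rightarrow> 'v gstate" where
  "init_state v0 = \<lparr> loc = (\<lambda>i. \<lparr> history = (\<lambda>k. if k = 0 then v0 else undefined),
      w_sync = (\<lambda>j. 0), r_sync = (\<lambda>j. 0), opst = Idle, pend = {#} \<rparr>),
    net = {#}, crashed = {} \<rparr>"

definition send_to :: "nat \<Rightarrow> nat \<Rightarrow> (nat \<Rightarrow> bool) \<Rightarrow> 'v msg \<Rightarrow> (nat \<times> nat \<times> 'v msg) multiset" where
  "send_to n i P m = image_mset (\<lambda>l. (i, l, m)) (mset_set {l \<in> {1..n}. P l})"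

definition set_loc :: "'v gstate \<Rightarrow> nat \<Rightarrow> 'v lstate \<Rightarrow> 'v gstate" where
  "set_loc s i ls = s\<lparr> loc := (loc s)(i := ls) \<rparr>"

text \<open>Body of the WRITE(b,v) handler at p_i for a message from p_j, executed once
 its wait condition b = (w_sync_i[j]+1) mod 2 holds. Returns new local state and sent messages.\<close>
definition write_body :: "nat \<Rightarrow> nat \<Rightarrow> nat \<Rightarrow> 'v \<Rightarrow> 'v lstate \<Rightarrow> 'v lstate \<times> (nat \<times> nat \<times> 'v msg) multiset" where
  "write_body n i j v ls =
    (let wsn = w_sync ls j + 1 in
     if wsn = w_sync ls i + 1 then
       (let ws' = (w_sync ls)(i := wsn);
            ls1 = ls\<lparr> w_sync := ws', history := (history ls)(wsn := v) \<rparr>;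
            out = send_to n i (\<lambda>l. ws' l = wsn - 1) (WriteM (wsn mod 2) v)
        in (ls1\<lparr> w_sync := (w_sync ls1)(j := wsn) \<rparr>, out))
     else if wsn < w_sync ls i then
       (ls\<lparr> w_sync := (w_sync ls)(j := wsn) \<rparr>,
        {# (i, j, WriteM ((wsn + 1) mod 2) (history ls (wsn + 1))) #})
     else (ls\<lparr> w_sync := (w_sync ls)(j := wsn) \<rparr>, {#}))"

inductive step :: "nat \<Rightarrow> nat \<Rightarrow> nat \<Rightarrow> 'v gstate \<Rightarrow> 'v gstate \<Rightarrow> bool" where
  invoke_write:
  "\<lbrakk> i = w; i \<notin> crashed s; ls = loc s i; opst ls = Idle; wsn = w_sync ls i + 1;
     ws' = (w_sync ls)(i := wsn) \<rbrakk> \<Longrightarrow>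
   step n t w s ((set_loc s i (ls\<lparr> w_sync := ws', history := (history ls)(wsn := v),
                                   opst := Writing wsn \<rparr>))
                 \<lparr> net := net s + send_to n i (\<lambda>j. ws' j = wsn - 1) (WriteM (wsn mod 2) v) \<rparr>)"
| write_return:
  "\<lbrakk> i \<in> {1..n}; i \<notin> crashed s; ls = loc s i; opst ls = Writing wsn;
     card {j \<in> {1..n}. w_sync ls j = wsn} \<ge> n - t \<rbrakk> \<Longrightarrow>
   step n t w s (set_loc s i (ls\<lparr> opst := Idle \<rparr>))"
| invoke_read:
  "\<lbrakk> i \<in> {1..n}; i \<notin> crashed s; ls = loc s i; opst ls = Idle; rsn = r_sync ls i + 1 \<rbrakk> \<Longrightarrow>
   step n t w s ((set_loc s i (ls\<lparr> r_sync := (r_sync ls)(i := rsn), opst := ReadWait1 rsn \<rparr>))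
                 \<lparr> net := net s + send_to n i (\<lambda>j. j \<noteq> i) ReadM \<rparr>)"
| read_phase2:
  "\<lbrakk> i \<in> {1..n}; i \<notin> crashed s; ls = loc s i; opst ls = ReadWait1 rsn;
     card {j \<in> {1..n}. r_sync ls j = rsn} \<ge> n - t \<rbrakk> \<Longrightarrow>
   step n t w s (set_loc s i (ls\<lparr> opst := ReadWait2 (w_sync ls i) \<rparr>))"
| read_return:
  "\<lbrakk> i \<in> {1..n}; i \<notin> crashed s; ls = loc s i; opst ls = ReadWait2 sn;
     card {j \<in> {1..n}. w_sync ls j \<ge> sn} \<ge> n - t \<rbrakk> \<Longrightarrow>
   step n t w s (set_loc s i (ls\<lparr> opst := Idle \<rparr>))"
| recv_write:
  "\<lbrakk> i \<in> {1..n}; i \<notin> crashed s; ls = loc s i; (j, i, WriteM b v) \<in># net s \<rbrakk> \<Longrightarrow>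
   step n t w s ((set_loc s i (ls\<lparr> pend := pend ls + {# HWrite j b v #} \<rparr>))
                 \<lparr> net := net s - {# (j, i, WriteM b v) #} \<rparr>)"
| recv_read:
  "\<lbrakk> i \<in> {1..n}; i \<notin> crashed s; ls = loc s i; (j, i, ReadM) \<in># net s \<rbrakk> \<Longrightarrow>
   step n t w s ((set_loc s i (ls\<lparr> pend := pend ls + {# HRead j (w_sync ls i) #} \<rparr>))
                 \<lparr> net := net s - {# (j, i, ReadM) #} \<rparr>)"
| recv_proceed:
  "\<lbrakk> i \<in> {1..n}; i \<notin> crashed s; ls = loc s i; (j, i, ProceedM) \<in># net s \<rbrakk> \<Longrightarrow>
   step n t w s ((set_loc s i (ls\<lparr> r_sync := (r_sync ls)(j := r_sync ls j + 1) \<rparr>))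
                 \<lparr> net := net s - {# (j, i, ProceedM) #} \<rparr>)"
| exec_write_handler:
  "\<lbrakk> i \<in> {1..n}; i \<notin> crashed s; ls = loc s i; HWrite j b v \<in># pend ls;
     b = (w_sync ls j + 1) mod 2;
     write_body n i j v (ls\<lparr> pend := pend ls - {# HWrite j b v #} \<rparr>) = (ls', out) \<rbrakk> \<Longrightarrow>
   step n t w s ((set_loc s i ls') \<lparr> net := net s + out \<rparr>)"
| exec_read_handler:
  "\<lbrakk> i \<in> {1..n}; i \<notin> crashed s; ls = loc s i; HRead j sn \<in># pend ls;
     w_sync ls j \<ge> sn \<rbrakk> \<Longrightarrow>
   step n t w s ((set_loc s i (ls\<lparr> pend := pend ls - {# HRead j sn #} \<rparr>))
                 \<lparr> net := net s + {# (i, j, ProceedM) #} \<rparr>)"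
| crash:
  "\<lbrakk> i \<in> {1..n}; i \<notin> crashed s; card (crashed s) < t \<rbrakk> \<Longrightarrow>
   step n t w s (s\<lparr> crashed := insert i (crashed s) \<rparr>)"

inductive reach :: "nat \<Rightarrow> nat \<Rightarrow> nat \<Rightarrow> 'v \<Rightarrow> 'v gstate \<Rightarrow> bool" where
  init: "reach n t w v0 (init_state v0)"
| stp: "reach n t w v0 s \<Longrightarrow> step n t w s s' \<Longrightarrow> reach n t w v0 s'"

end

theory Submission
  imports Defs
begin

(* A WRITE message carries only the parity of its sequence number, so the state of the channel
   from p_i to p_j is the multiset of parities in transit, in the network or in WRITE handlers
   pending at p_j. Process p_i sends the k-th write to p_j only after it has adopted k itself
   and knows that p_j holds k - 1, so it has sent exactly the writes 1, ..., min(w_sync_i[i],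
   w_sync_i[j] + 1). The parities in transit are those of w_sync_j[i] + 1 up to that bound:
   a handler at p_j fires only on the parity of w_sync_j[i] + 1, and since these are the
   parities of consecutive numbers, consuming any message of that parity leaves exactly the
   parities of the later ones. This invariant is preserved by every step, and it bounds
   w_sync_j[i] by w_sync_i[i]. *)

definition parity_seq :: "nat \<Rightarrow> nat \<Rightarrow> nat multiset" where
  "parity_seq a c = mset (map (\<lambda>k. k mod 2) [Suc a..<Suc c])"

lemma parity_seq_self [simp]: "parity_seq a a = {#}"
  by (simp add: parity_seq_def)

lemma parity_seq_Suc [simp]: "parity_seq c (Suc c) = {#Suc c mod 2#}"
  by (simp add: parity_seq_def)

lemma size_parity_seq: "size (parity_seq a c) = c - a"
  by (simp add: parity_seq_def Suc_diff_Suc)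

lemma parity_seq_append:
  assumes "a \<le> b" and "b \<le> c"
  shows "parity_seq a b + parity_seq b c = parity_seq a c"
proof -
  have "[Suc a..<Suc c] = [Suc a..<Suc b] @ [Suc b..<Suc c]"
    using upt_add_eq_append[of "Suc a" "Suc b" "c - b"] assms by simp
  then show ?thesis by (simp add: parity_seq_def)
qed

lemma parity_seq_cancel:
  assumes "a \<le> b" and "a \<le> c" and "parity_seq a b + X = parity_seq a c"
  shows "b \<le> c" and "X = parity_seq b c"
proof -
  have "b - a \<le> c - a"
    using arg_cong[OF assms(3), of size] by (simp add: size_parity_seq)
  then show "b \<le> c" using assms(1,2) by linarith
  then have "parity_seq a b + X = parity_seq a b + parity_seq b c"
    using assms parity_seq_append by metis
  then show "X = parity_seq b c" by simp
qed

fun msg_write_parity :: "nat \<Rightarrow> nat \<Rightarrow> nat \<times> nat \<times> 'v msg \<Rightarrow> nat multiset" where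
  "msg_write_parity i j (a, c, WriteM b v) = (if a = i \<and> c = j then {#b#} else {#})"
| "msg_write_parity i j (a, c, ReadM) = {#}"
| "msg_write_parity i j (a, c, ProceedM) = {#}"

fun hnd_write_parity :: "nat \<Rightarrow> 'v hnd \<Rightarrow> nat multiset" where
  "hnd_write_parity i (HWrite a b v) = (if a = i then {#b#} else {#})"
| "hnd_write_parity i (HRead a sn) = {#}"

definition net_parities :: "(nat \<times> nat \<times> 'v msg) multiset \<Rightarrow> nat \<Rightarrow> nat \<Rightarrow> nat multiset" where
  "net_parities N i j = sum_mset (image_mset (msg_write_parity i j) N)"

definition pend_parities :: "'v hnd multiset \<Rightarrow> nat \<Rightarrow> nat multiset" where
  "pend_parities P i = sum_mset (image_mset (hnd_write_parity i) P)"

lemma net_parities_empty [simp]: "net_parities {#} i j = {#}"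
  and net_parities_add_mset [simp]:
    "net_parities (add_mset x N) i j = msg_write_parity i j x + net_parities N i j"
  and net_parities_union [simp]:
    "net_parities (M + N) i j = net_parities M i j + net_parities N i j"
  by (simp_all add: net_parities_def)

lemma pend_parities_empty [simp]: "pend_parities {#} i = {#}"
  and pend_parities_add_mset [simp]:
    "pend_parities (add_mset x P) i = hnd_write_parity i x + pend_parities P i"
  and pend_parities_union [simp]: "pend_parities (P + Q) i = pend_parities P i + pend_parities Q i"
  by (simp_all add: pend_parities_def)

lemma net_parities_remove:
  "x \<in># N \<Longrightarrow> net_parities N i j = msg_write_parity i j x + net_parities (N - {#x#}) i j"
  by (metis insert_DiffM net_parities_add_mset)

lemma pend_parities_remove:
  "x \<in># P \<Longrightarrow> pend_parities P i = hnd_write_parity i x + pend_parities (P - {#x#}) i"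
  by (metis insert_DiffM pend_parities_add_mset)

lemma pend_parities_mono: "P \<subseteq># Q \<Longrightarrow> pend_parities P i \<subseteq># pend_parities Q i"
  by (auto simp: mset_subset_eq_exists_conv)

lemma net_parities_send_to_write:
  "net_parities (send_to n a P (WriteM b v)) i j =
     (if a = i \<and> j \<in> {1..n} \<and> P j then {#b#} else {#})"
proof -
  have "net_parities (send_to n a P (WriteM b v)) i j
      = (\<Sum>l\<in>{l \<in> {1..n}. P l}. msg_write_parity i j (a, l, WriteM b v))"
    by (simp add: net_parities_def send_to_def sum_unfold_sum_mset image_mset.compositionality comp_def)
  also have "\<dots> = (\<Sum>l\<in>{l \<in> {1..n}. P l}. if l = j then (if a = i then {#b#} else {#}) else {#})"
    by (rule sum.cong) auto
  finally show ?thesis by (simp add: sum.delta)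
qed

lemma net_parities_send_to_read [simp]: "net_parities (send_to n a P ReadM) i j = {#}"
  by (simp add: net_parities_def send_to_def image_mset.compositionality comp_def)

definition writes_sent :: "(nat \<Rightarrow> nat) \<Rightarrow> nat \<Rightarrow> nat \<Rightarrow> nat" where
  "writes_sent ws i j = min (ws i) (Suc (ws j))"

definition in_transit ::
    "(nat \<Rightarrow> 'v lstate) \<Rightarrow> (nat \<times> nat \<times> 'v msg) multiset \<Rightarrow> nat \<Rightarrow> nat \<Rightarrow> nat multiset" where
  "in_transit L N i j = net_parities N i j + pend_parities (pend (L j)) i"

definition channel_inv ::
    "(nat \<Rightarrow> 'v lstate) \<Rightarrow> (nat \<times> nat \<times> 'v msg) multiset \<Rightarrow> nat \<Rightarrow> nat \<Rightarrow> bool" where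
  "channel_inv L N i j \<longleftrightarrow>
     w_sync (L j) i \<le> writes_sent (w_sync (L i)) i j \<and>
     in_transit L N i j = parity_seq (w_sync (L j) i) (writes_sent (w_sync (L i)) i j)"

definition sync_inv :: "nat \<Rightarrow> (nat \<Rightarrow> 'v lstate) \<Rightarrow> (nat \<times> nat \<times> 'v msg) multiset \<Rightarrow> bool" where
  "sync_inv n L N \<longleftrightarrow>
     (\<forall>i j. w_sync (L i) j \<le> w_sync (L i) i) \<and>
     (\<forall>i j. i \<notin> {1..n} \<or> i = j \<longrightarrow> in_transit L N i j = {#}) \<and>
     (\<forall>i\<in>{1..n}. \<forall>j\<in>{1..n}. i \<noteq> j \<longrightarrow> channel_inv L N i j)"

lemma sync_inv_own_max: "sync_inv n L N \<Longrightarrow> w_sync (L i) j \<le> w_sync (L i) i"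
  by (simp add: sync_inv_def)

lemma sync_inv_in_transit_empty:
  "sync_inv n L N \<Longrightarrow> i \<notin> {1..n} \<or> i = j \<Longrightarrow> in_transit L N i j = {#}"
  by (simp add: sync_inv_def)

lemma sync_inv_channel_inv:
  "sync_inv n L N \<Longrightarrow> i \<in> {1..n} \<Longrightarrow> j \<in> {1..n} \<Longrightarrow> i \<noteq> j \<Longrightarrow> channel_inv L N i j"
  by (simp add: sync_inv_def)

lemma sync_inv_init: "sync_inv n (loc (init_state v0)) (net (init_state v0))"
  by (simp add: sync_inv_def channel_inv_def in_transit_def init_state_def writes_sent_def)

lemma sync_inv_frame:
  assumes "sync_inv n L N"
    and "\<And>p. w_sync (L' p) = w_sync (L p)"
    and "\<And>p q. in_transit L' N' p q = in_transit L N p q"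
  shows "sync_inv n L' N'"
  using assms by (simp add: sync_inv_def channel_inv_def)

definition sends_next_writes ::
    "nat \<Rightarrow> nat \<Rightarrow> (nat \<Rightarrow> nat) \<Rightarrow> (nat \<Rightarrow> nat) \<Rightarrow> (nat \<times> nat \<times> 'v msg) multiset \<Rightarrow> bool" where
  "sends_next_writes n i ws ws' out \<longleftrightarrow>
     (\<forall>p q. p \<noteq> i \<or> q \<notin> {1..n} \<or> q = i \<longrightarrow> net_parities out p q = {#}) \<and>
     (\<forall>q\<in>{1..n}. q \<noteq> i \<longrightarrow> writes_sent ws i q \<le> writes_sent ws' i q \<and>
        net_parities out i q = parity_seq (writes_sent ws i q) (writes_sent ws' i q))"

lemma channel_inv_local_update:
  assumes old: "channel_inv L N p q" and p: "p \<in> {1..n}" and q: "q \<in> {1..n}" and pq: "p \<noteq> q"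
    and sends: "sends_next_writes n i (w_sync (L i)) (w_sync ls') out"
    and receives: "p \<noteq> i \<Longrightarrow> q = i \<Longrightarrow>
       w_sync (L i) p \<le> w_sync ls' p \<and>
       pend_parities (pend (L i)) p =
         parity_seq (w_sync (L i) p) (w_sync ls' p) + pend_parities (pend ls') p"
  shows "channel_inv (L(i := ls')) (N + out) p q"
proof -
  let ?L = "L(i := ls')" and ?N = "N + out"
  consider (sender) "p = i" | (receiver) "q = i" | (unaffected) "p \<noteq> i" "q \<noteq> i" by blast
  then show ?thesis
  proof cases
    case sender
    define a where "a = w_sync (L q) i"
    define c where "c = writes_sent (w_sync (L i)) i q"
    define c' where "c' = writes_sent (w_sync ls') i q"
    have sent: "c \<le> c'" "net_parities out i q = parity_seq c c'"
      using sends q pq sender by (auto simp: sends_next_writes_def c_def c'_def)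
    have "a \<le> c" "in_transit L N i q = parity_seq a c"
      using old sender by (simp_all add: channel_inv_def a_def c_def)
    moreover have "in_transit ?L ?N i q = in_transit L N i q + net_parities out i q"
      using pq sender by (simp add: in_transit_def)
    ultimately show ?thesis
      using sent sender pq by (simp add: channel_inv_def parity_seq_append a_def c'_def)
  next
    case receiver
    define a where "a = w_sync (L i) p"
    define a' where "a' = w_sync ls' p"
    define c where "c = writes_sent (w_sync (L p)) p i"
    have recv: "a \<le> a'"
      "pend_parities (pend (L i)) p = parity_seq a a' + pend_parities (pend ls') p"
      using receives pq receiver by (simp_all add: a_def a'_def)
    have "a \<le> c" "in_transit L N p i = parity_seq a c"
      using old receiver by (simp_all add: channel_inv_def a_def c_def)
    moreover have "net_parities out p i = {#}"
      using sends pq receiver by (simp add: sends_next_writes_def)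
    ultimately have "parity_seq a a' + in_transit ?L ?N p i = parity_seq a c"
      using recv receiver by (simp add: in_transit_def ac_simps)
    then show ?thesis
      using parity_seq_cancel[OF recv(1) \<open>a \<le> c\<close>] pq receiver
      by (simp add: channel_inv_def a'_def c_def)
  next
    case unaffected
    have "net_parities out p q = {#}" using sends unaffected by (simp add: sends_next_writes_def)
    then show ?thesis using old unaffected by (simp add: channel_inv_def in_transit_def)
  qed
qed

lemma sync_inv_local_update:
  assumes inv: "sync_inv n L N" and i: "i \<in> {1..n}"
    and own_max: "\<And>p. w_sync ls' p \<le> w_sync ls' i"
    and sends: "sends_next_writes n i (w_sync (L i)) (w_sync ls') out"
    and pend_sub: "pend ls' \<subseteq># pend (L i)"
    and receives: "\<And>p. p \<in> {1..n} \<Longrightarrow> p \<noteq> i \<Longrightarrow>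
       w_sync (L i) p \<le> w_sync ls' p \<and>
       pend_parities (pend (L i)) p =
         parity_seq (w_sync (L i) p) (w_sync ls' p) + pend_parities (pend ls') p"
  shows "sync_inv n (L(i := ls')) (N + out)"
proof -
  let ?L = "L(i := ls')" and ?N = "N + out"
  have "in_transit ?L ?N p q = {#}" if pq: "p \<notin> {1..n} \<or> p = q" for p q
  proof -
    have "net_parities out p q = {#}" using sends pq i by (auto simp: sends_next_writes_def)
    moreover have "pend_parities (pend (?L q)) p \<subseteq># pend_parities (pend (L q)) p"
      using pend_parities_mono[OF pend_sub] by simp
    ultimately show ?thesis
      using sync_inv_in_transit_empty[OF inv pq] by (simp add: in_transit_def)
  qed
  moreover have "channel_inv ?L ?N p q"
    if "p \<in> {1..n}" and "q \<in> {1..n}" and "p \<noteq> q" for p q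
    using channel_inv_local_update[OF sync_inv_channel_inv[OF inv that] that sends] receives that
    by blast
  ultimately show ?thesis
    using inv own_max by (auto simp: sync_inv_def)
qed

lemma sends_next_writes_adopt:
  assumes own_max: "\<And>q. ws q \<le> ws i" and k: "k = ws i + 1" and ws': "ws' = ws(i := k)"
  shows "sends_next_writes n i ws ws' (send_to n i (\<lambda>l. ws' l = k - 1) (WriteM (k mod 2) v))"
  unfolding sends_next_writes_def
proof (intro conjI allI impI ballI)
  fix p q assume "p \<noteq> i \<or> q \<notin> {1..n} \<or> q = i"
  then show "net_parities (send_to n i (\<lambda>l. ws' l = k - 1) (WriteM (k mod 2) v)) p q = {#}"
    by (auto simp: net_parities_send_to_write k ws')
next
  fix q assume q: "q \<in> {1..n}" and qi: "q \<noteq> i"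
  show "writes_sent ws i q \<le> writes_sent ws' i q" by (simp add: writes_sent_def k ws' qi)
  show "net_parities (send_to n i (\<lambda>l. ws' l = k - 1) (WriteM (k mod 2) v)) i q
      = parity_seq (writes_sent ws i q) (writes_sent ws' i q)"
    using own_max[of q] q qi
    by (cases "ws q = ws i") (simp_all add: net_parities_send_to_write writes_sent_def k ws')
qed

lemma write_body_pend: "write_body n i j v ls = (ls', out) \<Longrightarrow> pend ls' = pend ls"
  by (auto simp: write_body_def Let_def split: if_splits)

lemma write_body_w_sync:
  assumes "write_body n i j v ls = (ls', out)" and "j \<noteq> i" and "w_sync ls j \<le> w_sync ls i"
  shows "w_sync ls' =
    (w_sync ls)(i := max (w_sync ls i) (Suc (w_sync ls j)), j := Suc (w_sync ls j))"
  using assms by (auto simp: write_body_def Let_def split: if_splits)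

lemma write_body_sends_next_writes:
  assumes body: "write_body n i j v ls = (ls', out)" and j: "j \<in> {1..n}" and ji: "j \<noteq> i"
    and own_max: "\<And>q. w_sync ls q \<le> w_sync ls i"
  shows "sends_next_writes n i (w_sync ls) (w_sync ls') out"
proof -
  define ws where "ws = w_sync ls"
  define m where "m = ws j"
  consider (adopt) "m = ws i" | (resend) "Suc m < ws i" | (catch_up) "Suc m = ws i"
    using own_max[of j] by (fastforce simp: m_def ws_def)
  then show ?thesis
  proof cases
    case adopt
    let ?ws' = "ws(i := m + 1)"
    have out: "out = send_to n i (\<lambda>l. ?ws' l = m + 1 - 1) (WriteM ((m + 1) mod 2) v)"
      and ws': "w_sync ls' = ?ws'(j := m + 1)"
      using body adopt by (auto simp: write_body_def Let_def m_def ws_def)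
    have "writes_sent (w_sync ls') i = writes_sent ?ws' i"
      using adopt ji by (intro ext) (simp add: ws' writes_sent_def m_def)
    moreover have "sends_next_writes n i ws ?ws' out"
      unfolding out by (rule sends_next_writes_adopt) (use own_max adopt in \<open>simp_all add: ws_def\<close>)
    ultimately show ?thesis by (simp add: sends_next_writes_def ws_def)
  next
    case resend
    have "out = {#(i, j, WriteM (Suc (Suc m) mod 2) (history ls (Suc (Suc m))))#}"
      and "w_sync ls' = ws(j := Suc m)"
      using body resend by (auto simp: write_body_def Let_def m_def ws_def)
    then show ?thesis
      using resend j ji by (auto simp: sends_next_writes_def writes_sent_def m_def ws_def)
  next
    case catch_up
    have "out = {#}" and "w_sync ls' = ws(j := Suc m)"
      using body catch_up by (auto simp: write_body_def Let_def m_def ws_def)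
    then show ?thesis
      using catch_up ji by (auto simp: sends_next_writes_def writes_sent_def m_def ws_def)
  qed
qed

lemma sync_inv_invoke_write:
  assumes inv: "sync_inv n L N" and w: "w \<in> {1..n}"
    and k: "k = w_sync (L w) w + 1" and ws': "ws' = (w_sync (L w))(w := k)"
  shows "sync_inv n (L(w := (L w)\<lparr>w_sync := ws', history := h, opst := st\<rparr>))
           (N + send_to n w (\<lambda>j. ws' j = k - 1) (WriteM (k mod 2) v))"
proof (rule sync_inv_local_update[OF inv w])
  have own_max: "\<And>q. w_sync (L w) q \<le> w_sync (L w) w" using sync_inv_own_max[OF inv] .
  then show "\<And>p. w_sync ((L w)\<lparr>w_sync := ws', history := h, opst := st\<rparr>) p \<le>
      w_sync ((L w)\<lparr>w_sync := ws', history := h, opst := st\<rparr>) w"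
    by (simp add: ws' k le_SucI)
  show "sends_next_writes n w (w_sync (L w)) (w_sync ((L w)\<lparr>w_sync := ws', history := h, opst := st\<rparr>))
      (send_to n w (\<lambda>j. ws' j = k - 1) (WriteM (k mod 2) v))"
    using sends_next_writes_adopt[OF own_max k ws'] by simp
qed (simp_all add: ws')

lemma pending_write_from_other:
  assumes inv: "sync_inv n L N" and hw: "HWrite j b v \<in># pend (L i)"
  shows "j \<in> {1..n}" and "j \<noteq> i"
proof -
  have "b \<in># in_transit L N j i"
    using pend_parities_remove[OF hw, of j] by (simp add: in_transit_def)
  then have "in_transit L N j i \<noteq> {#}" by auto
  then show "j \<in> {1..n}" and "j \<noteq> i"
    using sync_inv_in_transit_empty[OF inv, of j i] by blast+
qed

lemma sync_inv_exec_write_handler: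
  assumes inv: "sync_inv n L N" and i: "i \<in> {1..n}"
    and hw: "HWrite j b v \<in># pend (L i)" and b: "b = (w_sync (L i) j + 1) mod 2"
    and body: "write_body n i j v ((L i)\<lparr>pend := pend (L i) - {#HWrite j b v#}\<rparr>) = (ls', out)"
  shows "sync_inv n (L(i := ls')) (N + out)"
proof (rule sync_inv_local_update[OF inv i])
  note j = pending_write_from_other[OF inv hw]
  have own_max: "\<And>q. w_sync (L i) q \<le> w_sync (L i) i" using sync_inv_own_max[OF inv] .
  have pend': "pend ls' = pend (L i) - {#HWrite j b v#}" using write_body_pend[OF body] by simp
  have ws': "w_sync ls' =
      (w_sync (L i))(i := max (w_sync (L i) i) (Suc (w_sync (L i) j)), j := Suc (w_sync (L i) j))"
    using write_body_w_sync[OF body] j own_max by simp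
  show "\<And>p. w_sync ls' p \<le> w_sync ls' i" using own_max j by (auto simp: ws' le_max_iff_disj)
  show "sends_next_writes n i (w_sync (L i)) (w_sync ls') out"
    using write_body_sends_next_writes[OF body j] own_max by simp
  show "pend ls' \<subseteq># pend (L i)" by (simp add: pend')
  fix p assume "p \<in> {1..n}" and "p \<noteq> i"
  moreover have
    "pend_parities (pend (L i)) p = hnd_write_parity p (HWrite j b v) + pend_parities (pend ls') p"
    using pend_parities_remove[OF hw] pend' by simp
  ultimately show "w_sync (L i) p \<le> w_sync ls' p \<and>
      pend_parities (pend (L i)) p =
        parity_seq (w_sync (L i) p) (w_sync ls' p) + pend_parities (pend ls') p"
    using b by (cases "p = j") (simp_all add: ws')
qed

lemma sync_inv_step:
  assumes inv: "sync_inv n (loc s) (net s)" and w: "w \<in> {1..n}" and step: "step n t w s s'"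
  shows "sync_inv n (loc s') (net s')"
  using step
proof cases
  case (invoke_write i ls wsn ws' v)
  then show ?thesis using sync_inv_invoke_write[OF inv w, of wsn ws'] by (simp add: set_loc_def)
next
  case (exec_write_handler i ls j b v ls' out)
  then show ?thesis
    using sync_inv_exec_write_handler[OF inv, of i j b v ls' out] by (simp add: set_loc_def)
qed (auto intro!: sync_inv_frame[OF inv]
      simp: set_loc_def in_transit_def net_parities_remove pend_parities_remove)

lemma sync_inv_reach: "reach n t w v0 s \<Longrightarrow> w \<in> {1..n} \<Longrightarrow> sync_inv n (loc s) (net s)"
  by (induction rule: reach.induct) (auto intro: sync_inv_init sync_inv_step)

theorem lemma2:
  fixes n t w :: nat and v0 :: 'v and s :: "'v gstate"
  assumes "2 * t < n" and "w \<in> {1..n}"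
    and "reach n t w v0 s"
    and "i \<in> {1..n}" and "j \<in> {1..n}"
  shows "w_sync (loc s j) i \<le> w_sync (loc s i) i"
proof (cases "i = j")
  case False
  have "sync_inv n (loc s) (net s)" using sync_inv_reach assms(3,2) .
  then have "channel_inv (loc s) (net s) i j" using sync_inv_channel_inv assms(4,5) False by blast
  then show ?thesis by (simp add: channel_inv_def writes_sent_def)
qed simp

end
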